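(* Let $G$ be a finite group and $(c,\kappa_R,\kappa_L,b,a)\in\widetilde{\mathcal{PD}}(G)$. Set $\tilde c(g,h,k):=(-1)^{b(g)\cdot\kappa_R^{a(g)}(h,k)}c(g,h,k)$. Then $(\tilde c,\kappa_R,\kappa_R,0,a)\in\widetilde{\mathcal{PD}}(G)$ and $(c,\kappa_R,\kappa_L,b,a)\sim(\tilde c,\kappa_R,\kappa_R,0,a)$.
   Context: $\mathbb Z_2=\{0,1\}$ (additive group), $\mathrm U(1)$ multiplicative. For $A\in\{\mathbb Z_2,\mathrm U(1)\}$, $A\oplus A$ has componentwise group operation and the $\mathbb Z_2$-action $x^{a}=\begin{pmatrix}0&1\\1&0\end{pmatrix}^ax$ (swap components when $a=1$). $C^n(G,A\oplus A)$ denotes all maps $G^n\to A\oplus A$; $H^1(G,\mathbb Z_2)$ denotes group homomorphisms $G\to\mathbb Z_2$. For $a\in H^1(G,\mathbb Z_2)$: on $\mathbb Z_2\oplus\mathbb Z_2$-valued cochains, $d^1_ax(g,h)=x^{a(g)}(h)+x(g)-x(gh)$, $d^2_ay(g,h,k)=y^{a(g)}(h,k)+y(g,hk)-y(gh,k)-y(g,h)$; on $\mathrm U(1)\oplus\mathrm U(1)$-valued cochains (multiplicatively), $d^2_ay(g,h,k)=\frac{y^{a(g)}(h,k)\,y(g,hk)}{y(gh,k)\,y(g,h)}$, $d^3_az(g,h,k,f)=\frac{z^{a(g)}(h,k,f)\,z(g,hk,f)\,z(g,h,k)}{z(gh,k,f)\,z(g,h,kf)}$. For $x,y\in\mathbb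 Z_2\oplus\mathbb Z_2$, $x\cdot y:=(x_+y_+,x_-y_-)$ and $(-1)^x:=((-1)^{x_+},(-1)^{x_-})$. $\widetilde{\mathcal{PD}}(G)$ is the set of pentads $(c,\kappa_R,\kappa_L,b,a)$ with $c\in C^3(G,\mathrm U(1)\oplus\mathrm U(1))$, $\kappa_R,\kappa_L\in C^2(G,\mathbb Z_2\oplus\mathbb Z_2)$, $b\in C^1(G,\mathbb Z_2\oplus\mathbb Z_2)$, $a\in H^1(G,\mathbb Z_2)$ with $d^1_ab=\kappa_L+\kappa_R$, $d^2_a\kappa_R=0$, $d^2_a\kappa_L=0$, $d^3_ac(g,h,k,f)=(-1)^{\kappa_L(g,h)\cdot\kappa_R^{a(gh)}(k,f)}$. The relation $\sim$: $(c^{(1)},\kappa_R^{(1)},\kappa_L^{(1)},b^{(1)},a^{(1)})\sim(c^{(2)},\kappa_R^{(2)},\kappa_L^{(2)},b^{(2)},a^{(2)})$ iff $a^{(1)}=a^{(2)}=:a$ and there exist $m\in C^1(G,\mathbb Z_2\oplus\mathbb Z_2)$, $\sigma\in C^2(G,\mathrm U(1)\oplus\mathrm U(1))$ with $\kappa_R^{(2)}=d^1_am+\kappa_R^{(1)}$, $\kappa_L^{(2)}=d^1_ab^{(2)}-d^1_ab^{(1)}-d^1_am+\kappa_L^{(1)}$, and $c^{(2)}(g,h,k)=(-1)^{\kappa_L^{(1)}(g,h)\cdot m^{a(gh)}(k)}(-1)^{(b^{(2)}(g)-b^{(1)}(g)-m(g))\cdot(\kappa_R^{(2)})^{a(g)}(h,k)}d^2_a\sigma(g,h,k)c^{(1)}(g,h,k)$.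 *)

theory Defs
  imports "HOL-Algebra.Group" "HOL-Library.Z2" Complex_Main
begin

text \<open>Z2 is the field type bit; Z2 (+) Z2 is bit \<times> bit, U(1) (+) U(1) is complex \<times> complex
  restricted to unit-modulus components. Cochains are functions on the (type of the) group
  elements; all conditions are imposed only on arguments from the carrier.\<close>

type_synonym z2z2 = "bit \<times> bit"
type_synonym u1u1 = "complex \<times> complex"

definition act :: "bit \<Rightarrow> 'b \<times> 'b \<Rightarrow> 'b \<times> 'b" where
  "act a x = (if a = 1 then (snd x, fst x) else x)"

definition zadd :: "z2z2 \<Rightarrow> z2z2 \<Rightarrow> z2z2" where
  "zadd x y = (fst x + fst y, snd x + snd y)"

definition zsub :: "z2z2 \<Rightarrow> z2z2 \<Rightarrow> z2z2" where
  "zsub x y = (fst x - fst y, snd x - snd y)"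

definition zzero :: z2z2 where "zzero = (0, 0)"

definition zdot :: "z2z2 \<Rightarrow> z2z2 \<Rightarrow> z2z2" where
  "zdot x y = (fst x * fst y, snd x * snd y)"

definition bsign :: "bit \<Rightarrow> complex" where
  "bsign t = (if t = 1 then -1 else 1)"

definition zsign :: "z2z2 \<Rightarrow> u1u1" where
  "zsign x = (bsign (fst x), bsign (snd x))"

definition umul :: "u1u1 \<Rightarrow> u1u1 \<Rightarrow> u1u1" where
  "umul x y = (fst x * fst y, snd x * snd y)"

definition udiv :: "u1u1 \<Rightarrow> u1u1 \<Rightarrow> u1u1" where
  "udiv x y = (fst x / fst y, snd x / snd y)"

definition is_U1U1 :: "u1u1 \<Rightarrow> bool" where
  "is_U1U1 x \<longleftrightarrow> norm (fst x) = 1 \<and> norm (snd x) = 1"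

definition H1 :: "('g, 'm) monoid_scheme \<Rightarrow> ('g \<Rightarrow> bit) \<Rightarrow> bool" where
  "H1 G a \<longleftrightarrow> (\<forall>g\<in>carrier G. \<forall>h\<in>carrier G. a (g \<otimes>\<^bsub>G\<^esub> h) = a g + a h)"

definition d1a :: "('g, 'm) monoid_scheme \<Rightarrow> ('g \<Rightarrow> bit) \<Rightarrow> ('g \<Rightarrow> z2z2) \<Rightarrow> 'g \<Rightarrow> 'g \<Rightarrow> z2z2" where
  "d1a G a x g h = zsub (zadd (act (a g) (x h)) (x g)) (x (g \<otimes>\<^bsub>G\<^esub> h))"

definition d2a :: "('g, 'm) monoid_scheme \<Rightarrow> ('g \<Rightarrow> bit) \<Rightarrow> ('g \<Rightarrow> 'g \<Rightarrow> z2z2)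
    \<Rightarrow> 'g \<Rightarrow> 'g \<Rightarrow> 'g \<Rightarrow> z2z2" where
  "d2a G a y g h k = zsub (zsub (zadd (act (a g) (y h k)) (y g (h \<otimes>\<^bsub>G\<^esub> k)))
       (y (g \<otimes>\<^bsub>G\<^esub> h) k)) (y g h)"

definition d2u :: "('g, 'm) monoid_scheme \<Rightarrow> ('g \<Rightarrow> bit) \<Rightarrow> ('g \<Rightarrow> 'g \<Rightarrow> u1u1)
    \<Rightarrow> 'g \<Rightarrow> 'g \<Rightarrow> 'g \<Rightarrow> u1u1" where
  "d2u G a y g h k = udiv (umul (act (a g) (y h k)) (y g (h \<otimes>\<^bsub>G\<^esub> k)))
       (umul (y (g \<otimes>\<^bsub>G\<^esub> h) k) (y g h))"

definition d3u :: "('g, 'm) monoid_scheme \<Rightarrow> ('g \<Rightarrow> bit) \<Rightarrow> ('g \<Rightarrow> 'g \<Rightarrow> 'g \<Rightarrow> u1u1)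
    \<Rightarrow> 'g \<Rightarrow> 'g \<Rightarrow> 'g \<Rightarrow> 'g \<Rightarrow> u1u1" where
  "d3u G a z g h k f = udiv (umul (umul (act (a g) (z h k f)) (z g (h \<otimes>\<^bsub>G\<^esub> k) f)) (z g h k))
       (umul (z (g \<otimes>\<^bsub>G\<^esub> h) k f) (z g h (k \<otimes>\<^bsub>G\<^esub> f)))"

definition PD :: "('g, 'm) monoid_scheme \<Rightarrow> ('g \<Rightarrow> 'g \<Rightarrow> 'g \<Rightarrow> u1u1) \<Rightarrow> ('g \<Rightarrow> 'g \<Rightarrow> z2z2)
    \<Rightarrow> ('g \<Rightarrow> 'g \<Rightarrow> z2z2) \<Rightarrow> ('g \<Rightarrow> z2z2) \<Rightarrow> ('g \<Rightarrow> bit) \<Rightarrow> bool" where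
  "PD G c kR kL b a \<longleftrightarrow>
     (\<forall>g\<in>carrier G. \<forall>h\<in>carrier G. \<forall>k\<in>carrier G. is_U1U1 (c g h k)) \<and>
     H1 G a \<and>
     (\<forall>g\<in>carrier G. \<forall>h\<in>carrier G. d1a G a b g h = zadd (kL g h) (kR g h)) \<and>
     (\<forall>g\<in>carrier G. \<forall>h\<in>carrier G. \<forall>k\<in>carrier G. d2a G a kR g h k = zzero) \<and>
     (\<forall>g\<in>carrier G. \<forall>h\<in>carrier G. \<forall>k\<in>carrier G. d2a G a kL g h k = zzero) \<and>
     (\<forall>g\<in>carrier G. \<forall>h\<in>carrier G. \<forall>k\<in>carrier G. \<forall>f\<in>carrier G.
        d3u G a c g h k f = zsign (zdot (kL g h) (act (a (g \<otimes>\<^bsub>G\<^esub> h)) (kR k f))))"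

definition PD_rel :: "('g, 'm) monoid_scheme
    \<Rightarrow> ('g \<Rightarrow> 'g \<Rightarrow> 'g \<Rightarrow> u1u1) \<Rightarrow> ('g \<Rightarrow> 'g \<Rightarrow> z2z2) \<Rightarrow> ('g \<Rightarrow> 'g \<Rightarrow> z2z2) \<Rightarrow> ('g \<Rightarrow> z2z2) \<Rightarrow> ('g \<Rightarrow> bit)
    \<Rightarrow> ('g \<Rightarrow> 'g \<Rightarrow> 'g \<Rightarrow> u1u1) \<Rightarrow> ('g \<Rightarrow> 'g \<Rightarrow> z2z2) \<Rightarrow> ('g \<Rightarrow> 'g \<Rightarrow> z2z2) \<Rightarrow> ('g \<Rightarrow> z2z2) \<Rightarrow> ('g \<Rightarrow> bit)
    \<Rightarrow> bool" where
  "PD_rel G c1 kR1 kL1 b1 a1 c2 kR2 kL2 b2 a2 \<longleftrightarrow>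
     (\<forall>g\<in>carrier G. a1 g = a2 g) \<and>
     (\<exists>(m :: 'g \<Rightarrow> z2z2) (\<sigma> :: 'g \<Rightarrow> 'g \<Rightarrow> u1u1).
        (\<forall>g\<in>carrier G. \<forall>h\<in>carrier G. is_U1U1 (\<sigma> g h)) \<and>
        (\<forall>g\<in>carrier G. \<forall>h\<in>carrier G. kR2 g h = zadd (d1a G a1 m g h) (kR1 g h)) \<and>
        (\<forall>g\<in>carrier G. \<forall>h\<in>carrier G.
           kL2 g h = zadd (zsub (zsub (d1a G a1 b2 g h) (d1a G a1 b1 g h)) (d1a G a1 m g h)) (kL1 g h)) \<and>
        (\<forall>g\<in>carrier G. \<forall>h\<in>carrier G. \<forall>k\<in>carrier G.
           c2 g h k = umul (umul (umul
              (zsign (zdot (kL1 g h) (act (a1 (g \<otimes>\<^bsub>G\<^esub> h)) (m k))))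
              (zsign (zdot (zsub (zsub (b2 g) (b1 g)) (m g)) (act (a1 g) (kR2 h k)))))
              (d2u G a1 \<sigma> g h k)) (c1 g h k)))"

end

theory Submission
  imports Defs
begin

text \<open>Twisting \<open>c\<close> by the cup product \<open>b \<union> \<kappa>\<^sub>R\<close>, \<open>(b \<union> \<kappa>\<^sub>R)(g,h,k) = b(g) \<cdot> \<kappa>\<^sub>R\<^bsup>a(g)\<^esup>(h,k)\<close>,
  multiplies \<open>d\<^sup>3\<^sub>a c\<close> by \<open>(-1)\<^bsup>d(b \<union> \<kappa>\<^sub>R)\<^esup>\<close>. By the Leibniz rule
  \<open>d(b \<union> \<kappa>\<^sub>R) = d\<^sup>1\<^sub>a b \<union> \<kappa>\<^sub>R + b \<union> d\<^sup>2\<^sub>a \<kappa>\<^sub>R = (\<kappa>\<^sub>L + \<kappa>\<^sub>R) \<union> \<kappa>\<^sub>R\<close>, so the obstruction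
  \<open>\<kappa>\<^sub>L \<union> \<kappa>\<^sub>R\<close> of \<open>c\<close> becomes \<open>\<kappa>\<^sub>R \<union> \<kappa>\<^sub>R\<close> for the twisted cochain. The relation \<open>\<sim>\<close> is then
  witnessed by the trivial gauges \<open>m = 0\<close>, \<open>\<sigma> = 1\<close>: over \<open>\<int>\<^sub>2\<close> the sign \<open>(-1)\<^bsup>-b \<union> \<kappa>\<^sub>R\<^esup>\<close>
  it prescribes is exactly the twist.\<close>

(* Keep + and * on bit as field operations, not XOR/AND, so that ring normalisation applies. *)
declare add_bit_eq_xor [simp del] mult_bit_eq_and [simp del]

lemma zadd_self: "zadd x x = zzero"
  by (simp add: zadd_def zzero_def add_bit_eq_xor)

lemma bsign_add: "bsign (x + y) = bsign x * bsign y"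
  by (cases x; cases y) (simp_all add: bsign_def)

lemma zsign_zadd: "zsign (zadd x y) = umul (zsign x) (zsign y)"
  by (simp add: zsign_def zadd_def umul_def bsign_add)

lemma zsign_zsub: "zsign (zsub x y) = udiv (zsign x) (zsign y)"
  by (cases x; cases y) (simp add: zsign_def zsub_def udiv_def bsign_def)

lemma act_umul: "act a (umul x y) = umul (act a x) (act a y)"
  by (simp add: act_def umul_def)

lemma act_zsign: "act a (zsign x) = zsign (act a x)"
  by (simp add: act_def zsign_def)

lemma d1a_zero: "d1a G a (\<lambda>_. zzero) g h = zzero"
  by (simp add: d1a_def zsub_def zadd_def zzero_def act_def)

lemma d2u_one: "d2u G a (\<lambda>_ _. (1, 1)) g h k = (1, 1)"
  by (simp add: d2u_def act_def umul_def udiv_def)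

lemma d3u_umul:
  "d3u G a (\<lambda>g h k. umul (x g h k) (y g h k)) g h k f = umul (d3u G a x g h k f) (d3u G a y g h k f)"
  unfolding d3u_def act_umul by (simp add: umul_def udiv_def times_divide_times_eq mult_ac)

definition d3a :: "('g, 'm) monoid_scheme \<Rightarrow> ('g \<Rightarrow> bit) \<Rightarrow> ('g \<Rightarrow> 'g \<Rightarrow> 'g \<Rightarrow> z2z2)
    \<Rightarrow> 'g \<Rightarrow> 'g \<Rightarrow> 'g \<Rightarrow> 'g \<Rightarrow> z2z2" where
  "d3a G a t g h k f = zsub (zadd (zadd (act (a g) (t h k f)) (t g (h \<otimes>\<^bsub>G\<^esub> k) f)) (t g h k))
       (zadd (t (g \<otimes>\<^bsub>G\<^esub> h) k f) (t g h (k \<otimes>\<^bsub>G\<^esub> f)))"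

lemma d3u_zsign: "d3u G a (\<lambda>g h k. zsign (t g h k)) g h k f = zsign (d3a G a t g h k f)"
  by (simp only: d3u_def d3a_def act_zsign zsign_zadd zsign_zsub)

definition cup12 :: "('g, 'm) monoid_scheme \<Rightarrow> ('g \<Rightarrow> bit) \<Rightarrow> ('g \<Rightarrow> z2z2) \<Rightarrow> ('g \<Rightarrow> 'g \<Rightarrow> z2z2)
    \<Rightarrow> 'g \<Rightarrow> 'g \<Rightarrow> 'g \<Rightarrow> z2z2" where
  "cup12 G a x y g h k = zdot (x g) (act (a g) (y h k))"

definition cup22 :: "('g, 'm) monoid_scheme \<Rightarrow> ('g \<Rightarrow> bit) \<Rightarrow> ('g \<Rightarrow> 'g \<Rightarrow> z2z2) \<Rightarrow> ('g \<Rightarrow> 'g \<Rightarrow> z2z2)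
    \<Rightarrow> 'g \<Rightarrow> 'g \<Rightarrow> 'g \<Rightarrow> 'g \<Rightarrow> z2z2" where
  "cup22 G a x y g h k f = zdot (x g h) (act (a (g \<otimes>\<^bsub>G\<^esub> h)) (y k f))"

lemma d3a_cup12:
  assumes "a (g \<otimes>\<^bsub>G\<^esub> h) = a g + a h"
  shows "d3a G a (cup12 G a x y) g h k f
       = zadd (cup22 G a (d1a G a x) y g h k f) (zdot (x g) (act (a g) (d2a G a y h k f)))"
  unfolding d3a_def cup12_def cup22_def d1a_def d2a_def assms
  by (cases "a g"; cases "a h")
    (simp_all add: zadd_def zsub_def zdot_def act_def ring_distribs add_ac prod_eq_iff)

lemma d3u_twist_cup12:
  assumes a_hom: "a (g \<otimes>\<^bsub>G\<^esub> h) = a g + a h"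
    and d1a_b: "d1a G a b g h = zadd (kL g h) (kR g h)"
    and kR_cocycle: "d2a G a kR h k f = zzero"
    and c_obstruction: "d3u G a c g h k f = zsign (cup22 G a kL kR g h k f)"
  shows "d3u G a (\<lambda>g h k. umul (zsign (cup12 G a b kR g h k)) (c g h k)) g h k f
       = zsign (cup22 G a kR kR g h k f)"
proof -
  have "d3u G a (\<lambda>g h k. umul (zsign (cup12 G a b kR g h k)) (c g h k)) g h k f
      = umul (zsign (d3a G a (cup12 G a b kR) g h k f)) (zsign (cup22 G a kL kR g h k f))"
    by (simp add: d3u_umul d3u_zsign c_obstruction)
  also have "\<dots> = zsign (zadd (zadd (cup22 G a (\<lambda>g h. zadd (kL g h) (kR g h)) kR g h k f)
                                  (zdot (b g) (act (a g) zzero)))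
                            (cup22 G a kL kR g h k f))"
    by (simp add: d3a_cup12 a_hom kR_cocycle zsign_zadd cup22_def d1a_b)
  also have "\<dots> = zsign (cup22 G a kR kR g h k f)"
    by (simp add: cup22_def zadd_def zdot_def act_def zzero_def ring_distribs prod_eq_iff)
  finally show ?thesis .
qed

lemma PD_twist_cup12:
  assumes "PD G c kR kL b a"
  shows "PD G (\<lambda>g h k. umul (zsign (cup12 G a b kR g h k)) (c g h k)) kR kR (\<lambda>_. zzero) a"
  using assms unfolding PD_def
proof (intro conjI ballI; elim conjE)
  fix g h k f
  assume "g \<in> carrier G" "h \<in> carrier G" "k \<in> carrier G" "f \<in> carrier G"
    and "H1 G a"
    and "\<forall>g\<in>carrier G. \<forall>h\<in>carrier G. d1a G a b g h = zadd (kL g h) (kR g h)"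
    and "\<forall>g\<in>carrier G. \<forall>h\<in>carrier G. \<forall>k\<in>carrier G. d2a G a kR g h k = zzero"
    and "\<forall>g\<in>carrier G. \<forall>h\<in>carrier G. \<forall>k\<in>carrier G. \<forall>f\<in>carrier G.
           d3u G a c g h k f = zsign (zdot (kL g h) (act (a (g \<otimes>\<^bsub>G\<^esub> h)) (kR k f)))"
  then show "d3u G a (\<lambda>g h k. umul (zsign (cup12 G a b kR g h k)) (c g h k)) g h k f
           = zsign (zdot (kR g h) (act (a (g \<otimes>\<^bsub>G\<^esub> h)) (kR k f)))"
    using d3u_twist_cup12[of a G g h b kL kR k f c] by (simp add: H1_def cup22_def)
qed (auto simp: is_U1U1_def umul_def zsign_def bsign_def d1a_zero zadd_self)

lemma PD_rel_twist_cup12: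
  assumes "\<forall>g\<in>carrier G. \<forall>h\<in>carrier G. d1a G a b g h = zadd (kL g h) (kR g h)"
  shows "PD_rel G c kR kL b a
           (\<lambda>g h k. umul (zsign (cup12 G a b kR g h k)) (c g h k)) kR kR (\<lambda>_. zzero) a"
  unfolding PD_rel_def
proof (intro conjI ballI exI[of _ "\<lambda>_. zzero"] exI[of _ "\<lambda>_ _. (1, 1)"])
  fix g h assume "g \<in> carrier G" "h \<in> carrier G"
  then show "kR g h = zadd (zsub (zsub (d1a G a (\<lambda>_. zzero) g h) (d1a G a b g h))
                                   (d1a G a (\<lambda>_. zzero) g h)) (kL g h)"
    using assms by (simp add: d1a_zero zsub_def zadd_def zzero_def prod_eq_iff add_ac)
qed (simp_all add: is_U1U1_def d1a_def d2u_one cup12_def zadd_def zzero_def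
    zsign_def zdot_def zsub_def act_def umul_def bsign_def)

theorem lemma2p4:
  fixes G :: "('g, 'm) monoid_scheme"
    and c :: "'g \<Rightarrow> 'g \<Rightarrow> 'g \<Rightarrow> complex \<times> complex"
    and kR kL :: "'g \<Rightarrow> 'g \<Rightarrow> bit \<times> bit"
    and b :: "'g \<Rightarrow> bit \<times> bit"
    and a :: "'g \<Rightarrow> bit"
  assumes "group G" and "finite (carrier G)"
    and "PD G c kR kL b a"
  shows "PD G (\<lambda>g h k. umul (zsign (zdot (b g) (act (a g) (kR h k)))) (c g h k)) kR kR (\<lambda>_. zzero) a
       \<and> PD_rel G c kR kL b a
           (\<lambda>g h k. umul (zsign (zdot (b g) (act (a g) (kR h k)))) (c g h k)) kR kR (\<lambda>_. zzero) a"
proof -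
  have "\<forall>g\<in>carrier G. \<forall>h\<in>carrier G. d1a G a b g h = zadd (kL g h) (kR g h)"
    using \<open>PD G c kR kL b a\<close> by (simp add: PD_def)
  with \<open>PD G c kR kL b a\<close> show ?thesis
    using PD_twist_cup12 PD_rel_twist_cup12 unfolding cup12_def by blast
qed

end
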